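(* Let $R$ be the right shift on $\ell^2_{\mathbb{H}}(\mathbb{Z})$ defined by $R(x)=y$ with $y_i=x_{i+1}$ for $i\neq-1$ and $y_{-1}=0$. Then $\sigma_{S,\pi}^{\Phi^0}(R)$ is properly contained in $\sigma_S(R)$.
   Context: $\mathbb{H}$ denotes the quaternions, $Re(q)$ the real part and $|q|$ the norm. $\ell^2_{\mathbb{H}}(\mathbb{Z})=\{x:\mathbb{Z}\to\mathbb{H}:\sum_i|x_i|^2<\infty\}$ is a right quaternionic Hilbert space with $xa=(x_ia)_i$ and $\langle x,y\rangle=\sum_i\overline{x_i}y_i$, equipped with the left multiplication induced by the standard Hilbert basis $\{e_n\}$, i.e. $qx=(qx_i)_i$. $\mathcal{B}=\mathcal{B}(\ell^2_{\mathbb{H}}(\mathbb{Z}))$ (bounded right linear operators with $(qT)x=q(Tx)$, $(Tq)x=T(qx)$, composition, operator norm) is a quaternionic two-sided Banach algebra with unit $\mathbb{I}$; $\mathcal{K}$ is its ideal of compact operators and $\pi:\mathcal{B}\to\mathcal{B}/\mathcal{K}$ the quotient map. For $T\in\mathcal{B}$, $R_q(T)=T^2-2Re(q)T+|q|^2\mathbb{I}$, $\sigma_S(T)=\{q\in\mathbb{H}:R_q(T)\notin\mathcal{B}^{-1}\}$, $\Phi_\pi^0=\mathcal{B}^{-1}+\mathcal{K}$, and $\sigma_{S,\pi}^{\Phi^0}(T)=\{q\in\mathbb{H}:R_q(T)\notin\Phi_\pi^0\}$. *)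

theory Defs
  imports "HOL-Analysis.Analysis"
begin

datatype quat = Quat (qre: real) (qi: real) (qj: real) (qk: real)

definition qzero :: quat where "qzero = Quat 0 0 0 0"

definition qadd :: "quat \<Rightarrow> quat \<Rightarrow> quat" where
  "qadd p q = Quat (qre p + qre q) (qi p + qi q) (qj p + qj q) (qk p + qk q)"

definition qneg :: "quat \<Rightarrow> quat" where
  "qneg p = Quat (- qre p) (- qi p) (- qj p) (- qk p)"

definition qsub :: "quat \<Rightarrow> quat \<Rightarrow> quat" where
  "qsub p q = qadd p (qneg q)"

definition qmul :: "quat \<Rightarrow> quat \<Rightarrow> quat" where
  "qmul p q = Quat
     (qre p * qre q - qi p * qi q - qj p * qj q - qk p * qk q)
     (qre p * qi q + qi p * qre q + qj p * qk q - qk p * qj q)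
     (qre p * qj q - qi p * qk q + qj p * qre q + qk p * qi q)
     (qre p * qk q + qi p * qj q - qj p * qi q + qk p * qre q)"

definition qscale :: "real \<Rightarrow> quat \<Rightarrow> quat" where
  "qscale r p = Quat (r * qre p) (r * qi p) (r * qj p) (r * qk p)"

definition qnorm2 :: "quat \<Rightarrow> real" where
  "qnorm2 p = (qre p)\<^sup>2 + (qi p)\<^sup>2 + (qj p)\<^sup>2 + (qk p)\<^sup>2"

definition qnorm :: "quat \<Rightarrow> real" where
  "qnorm p = sqrt (qnorm2 p)"

type_synonym qseq = "int \<Rightarrow> quat"

definition l2H :: "qseq set" where
  "l2H = {x. (\<lambda>i. qnorm2 (x i)) summable_on UNIV}"

definition l2norm :: "qseq \<Rightarrow> real" where
  "l2norm x = sqrt (\<Sum>\<^sub>\<infinity>i. qnorm2 (x i))"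

definition sadd :: "qseq \<Rightarrow> qseq \<Rightarrow> qseq" where
  "sadd x y = (\<lambda>i. qadd (x i) (y i))"

definition ssub :: "qseq \<Rightarrow> qseq \<Rightarrow> qseq" where
  "ssub x y = (\<lambda>i. qsub (x i) (y i))"

definition srmul :: "qseq \<Rightarrow> quat \<Rightarrow> qseq" where
  "srmul x a = (\<lambda>i. qmul (x i) a)"

definition sscale :: "real \<Rightarrow> qseq \<Rightarrow> qseq" where
  "sscale r x = (\<lambda>i. qscale r (x i))"

text \<open>Operators are functions on sequences; only their behaviour on \<open>l2H\<close> matters.\<close>
type_synonym qop = "qseq \<Rightarrow> qseq"

definition bounded_op :: "qop \<Rightarrow> bool" where
  "bounded_op T \<longleftrightarrow>
     (\<forall>x\<in>l2H. T x \<in> l2H) \<and>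
     (\<forall>x\<in>l2H. \<forall>y\<in>l2H. T (sadd x y) = sadd (T x) (T y)) \<and>
     (\<forall>x\<in>l2H. \<forall>a. T (srmul x a) = srmul (T x) a) \<and>
     (\<exists>C. \<forall>x\<in>l2H. l2norm (T x) \<le> C * l2norm x)"

definition idop :: qop where "idop = (\<lambda>x. x)"

definition invertible_op :: "qop \<Rightarrow> bool" where
  "invertible_op T \<longleftrightarrow> bounded_op T \<and>
     (\<exists>S. bounded_op S \<and> (\<forall>x\<in>l2H. S (T x) = x \<and> T (S x) = x))"

definition compact_op :: "qop \<Rightarrow> bool" where
  "compact_op K \<longleftrightarrow> bounded_op K \<and>
     (\<forall>xs :: nat \<Rightarrow> qseq. (\<forall>n. xs n \<in> l2H) \<and> (\<exists>B. \<forall>n. l2norm (xs n) \<le> B) \<longrightarrow>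
        (\<exists>r y. strict_mono r \<and> y \<in> l2H \<and>
           (\<lambda>n. l2norm (ssub (K (xs (r n))) y)) \<longlonglongrightarrow> 0))"

text \<open>\<open>\<Phi>\<^sup>0_\<pi> = \<B>\<^sup>-\<^sup>1 + \<K>\<close> (operators identified when they agree on \<open>l2H\<close>).\<close>
definition Phi0 :: "qop \<Rightarrow> bool" where
  "Phi0 T \<longleftrightarrow> (\<exists>S K. invertible_op S \<and> compact_op K \<and>
                  (\<forall>x\<in>l2H. T x = sadd (S x) (K x)))"

definition Rq :: "quat \<Rightarrow> qop \<Rightarrow> qop" where
  "Rq q T = (\<lambda>x. sadd (ssub (T (T x)) (sscale (2 * qre q) (T x)))
                        (sscale ((qnorm q)\<^sup>2) (idop x)))"

definition S_spectrum :: "qop \<Rightarrow> quat set" where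
  "S_spectrum T = {q. \<not> invertible_op (Rq q T)}"

definition S_Phi0_spectrum :: "qop \<Rightarrow> quat set" where
  "S_Phi0_spectrum T = {q. \<not> Phi0 (Rq q T)}"

definition Rshift :: qop where
  "Rshift x = (\<lambda>i. if i = -1 then qzero else x (i + 1))"

end

theory Submission
  imports Defs
begin

text \<open>Every invertible operator is invertible plus the compact operator 0, so the
  \<open>\<Phi>\<^sup>0\<close>-spectrum of any operator lies in its S-spectrum. The point \<open>q = 0\<close> separates
  the two spectra of \<open>R\<close>: there \<open>R\<^sub>q(R) = R\<^sup>2\<close>, which annihilates \<open>e\<^sub>0\<close> and so is not
  invertible, while \<open>R\<^sup>2\<close> differs from the invertible shift \<open>x \<mapsto> (x\<^sub>i\<^sub>+\<^sub>2)\<^sub>i\<close> only in the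
  coordinates \<open>-1, -2\<close>, i.e. by an operator of finite rank, hence compact.\<close>

lemma quat_eqI: "qre p = qre q \<Longrightarrow> qi p = qi q \<Longrightarrow> qj p = qj q \<Longrightarrow> qk p = qk q \<Longrightarrow> p = q"
  using quat.expand by blast

lemma qnorm2_nonneg: "0 \<le> qnorm2 p"
  by (simp add: qnorm2_def)

lemma qnorm2_qzero [simp]: "qnorm2 qzero = 0"
  by (simp add: qnorm2_def qzero_def)

lemma qadd_qzero [simp]: "qadd p qzero = p"
  by (rule quat_eqI) (simp_all add: qadd_def qzero_def)

lemma qadd_qneg_self [simp]: "qadd p (qneg p) = qzero"
  by (rule quat_eqI) (simp_all add: qadd_def qneg_def qzero_def)

lemma qsub_qzero_qzero [simp]: "qsub qzero qzero = qzero"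
  by (rule quat_eqI) (simp_all add: qsub_def qadd_def qneg_def qzero_def)

lemma qmul_qzero_left [simp]: "qmul qzero p = qzero"
  by (rule quat_eqI) (simp_all add: qmul_def qzero_def)

lemma qneg_qadd: "qneg (qadd p q) = qadd (qneg p) (qneg q)"
  by (rule quat_eqI) (simp_all add: qadd_def qneg_def)

lemma qneg_qmul: "qneg (qmul p q) = qmul (qneg p) q"
  by (rule quat_eqI) (simp_all add: qmul_def qneg_def algebra_simps)

text \<open>Quaternions as vectors of \<open>\<real>\<^sup>4\<close>, to borrow Bolzano-Weierstrass from the library.\<close>

definition quat_vec :: "quat \<Rightarrow> real \<times> real \<times> real \<times> real" where
  "quat_vec p = (qre p, qi p, qj p, qk p)"

definition vec_quat :: "real \<times> real \<times> real \<times> real \<Rightarrow> quat" where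
  "vec_quat c = Quat (fst c) (fst (snd c)) (fst (snd (snd c))) (snd (snd (snd c)))"

lemma norm_quat_vec_squared: "(norm (quat_vec p))\<^sup>2 = qnorm2 p"
  by (simp add: quat_vec_def norm_Pair qnorm2_def)

lemma norm_quat_vec_diff_squared: "(norm (quat_vec p - c))\<^sup>2 = qnorm2 (qsub p (vec_quat c))"
proof -
  have "quat_vec p - c = quat_vec (qsub p (vec_quat c))"
    by (simp add: quat_vec_def vec_quat_def qsub_def qadd_def qneg_def prod_eq_iff)
  then show ?thesis
    by (simp add: norm_quat_vec_squared)
qed

definition zero_seq :: qseq where
  "zero_seq = (\<lambda>i. qzero)"

lemma l2H_if_finite_support:
  assumes "finite {i. x i \<noteq> qzero}"
  shows "x \<in> l2H"
proof -
  have "{i. qnorm2 (x i) \<noteq> 0} \<subseteq> {i. x i \<noteq> qzero}"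
    by auto
  then have "finite {i \<in> UNIV. qnorm2 (x i) \<noteq> 0}"
    using assms finite_subset by auto
  then show ?thesis
    unfolding l2H_def by (simp add: finite_nonzero_values_imp_summable_on)
qed

lemma l2H_if_support_subset_two_points:
  assumes "\<And>i. i \<noteq> a \<Longrightarrow> i \<noteq> b \<Longrightarrow> x i = qzero"
  shows "x \<in> l2H"
  by (rule l2H_if_finite_support, rule finite_subset[of _ "{a, b}"]) (use assms in auto)

lemma sadd_zero_seq [simp]: "sadd x zero_seq = x"
  by (simp add: sadd_def zero_seq_def)

lemma srmul_zero_seq [simp]: "srmul zero_seq a = zero_seq"
  by (simp add: srmul_def zero_seq_def)

lemma ssub_zero_seq_zero_seq [simp]: "ssub zero_seq zero_seq = zero_seq"
  by (simp add: ssub_def zero_seq_def)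

lemma zero_seq_l2H: "zero_seq \<in> l2H"
  by (rule l2H_if_finite_support) (simp add: zero_seq_def)

lemma l2norm_nonneg: "0 \<le> l2norm x"
  by (simp add: l2norm_def infsum_nonneg qnorm2_nonneg)

lemma l2norm_zero_seq: "l2norm zero_seq = 0"
  by (simp add: l2norm_def zero_seq_def)

lemma l2norm_two_point_support:
  assumes "a \<noteq> b" and "\<And>i. i \<noteq> a \<Longrightarrow> i \<noteq> b \<Longrightarrow> x i = qzero"
  shows "l2norm x = sqrt (qnorm2 (x a) + qnorm2 (x b))"
proof -
  have "(\<Sum>\<^sub>\<infinity>i. qnorm2 (x i)) = (\<Sum>\<^sub>\<infinity>i\<in>{a, b}. qnorm2 (x i))"
    by (rule infsum_cong_neutral) (use assms(2) in auto)
  also have "\<dots> = qnorm2 (x a) + qnorm2 (x b)"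
    using assms(1) by simp
  finally show ?thesis
    by (simp add: l2norm_def)
qed

lemma two_coordinates_le_l2norm:
  assumes "x \<in> l2H" and "a \<noteq> b"
  shows "sqrt (qnorm2 (x a) + qnorm2 (x b)) \<le> l2norm x"
proof -
  have "qnorm2 (x a) + qnorm2 (x b) = (\<Sum>\<^sub>\<infinity>i\<in>{a, b}. qnorm2 (x i))"
    using assms(2) by simp
  also have "\<dots> \<le> (\<Sum>\<^sub>\<infinity>i. qnorm2 (x i))"
    by (rule infsum_mono_neutral) (use assms(1) in \<open>auto simp: l2H_def qnorm2_nonneg\<close>)
  finally show ?thesis
    by (simp add: l2norm_def)
qed

lemma invertible_op_inj_on: "invertible_op T \<Longrightarrow> inj_on T l2H"
  unfolding invertible_op_def by (metis inj_onI)

lemma compact_op_zero: "compact_op (\<lambda>x. zero_seq)"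
proof -
  have bounded: "bounded_op (\<lambda>x. zero_seq)"
    unfolding bounded_op_def
    by (auto simp: zero_seq_l2H l2norm_zero_seq intro!: exI[of _ 0])
  have "(\<lambda>n. l2norm (ssub zero_seq zero_seq)) \<longlonglongrightarrow> 0"
    by (simp add: l2norm_zero_seq)
  then show ?thesis
    unfolding compact_op_def using bounded zero_seq_l2H strict_mono_id by blast
qed

lemma Phi0_if_invertible_op: "invertible_op T \<Longrightarrow> Phi0 T"
  unfolding Phi0_def
  using compact_op_zero by fastforce

lemma S_Phi0_spectrum_subset_S_spectrum: "S_Phi0_spectrum T \<subseteq> S_spectrum T"
  unfolding S_Phi0_spectrum_def S_spectrum_def using Phi0_if_invertible_op by blast

lemma compact_op_if_two_point_support:
  assumes bounded: "bounded_op K" and "a \<noteq> b"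
    and support: "\<And>x i. x \<in> l2H \<Longrightarrow> i \<noteq> a \<Longrightarrow> i \<noteq> b \<Longrightarrow> K x i = qzero"
  shows "compact_op K"
  unfolding compact_op_def
proof (intro conjI bounded allI impI)
  fix xs :: "nat \<Rightarrow> qseq"
  assume "(\<forall>n. xs n \<in> l2H) \<and> (\<exists>B. \<forall>n. l2norm (xs n) \<le> B)"
  then obtain B where xs: "\<And>n. xs n \<in> l2H" and B: "\<And>n. l2norm (xs n) \<le> B"
    by blast
  obtain C where C: "\<And>x. x \<in> l2H \<Longrightarrow> l2norm (K x) \<le> C * l2norm x"
    using bounded unfolding bounded_op_def by blast
  define v where "v n = (quat_vec (K (xs n) a), quat_vec (K (xs n) b))" for n
  have "norm (v n) = l2norm (K (xs n))" for n
    using l2norm_two_point_support[OF \<open>a \<noteq> b\<close> support[OF xs]]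
    by (simp add: v_def norm_Pair norm_quat_vec_squared)
  also have "l2norm (K (xs n)) \<le> \<bar>C\<bar> * B" for n
  proof -
    have "C * l2norm (xs n) \<le> \<bar>C\<bar> * l2norm (xs n)"
      by (rule mult_right_mono) (simp_all add: l2norm_nonneg)
    then have "l2norm (K (xs n)) \<le> \<bar>C\<bar> * l2norm (xs n)"
      using C[OF xs[of n]] by linarith
    also have "\<dots> \<le> \<bar>C\<bar> * B"
      by (simp add: B mult_left_mono)
    finally show ?thesis .
  qed
  finally have "bounded (range v)"
    unfolding bounded_iff by blast
  then obtain l r where r: "strict_mono r" and lim: "(v \<circ> r) \<longlonglongrightarrow> l"
    using bounded_imp_convergent_subsequence by blast
  define y where
    "y = (\<lambda>i. if i = a then vec_quat (fst l) else if i = b then vec_quat (snd l) else qzero)"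
  have y: "y \<in> l2H"
    by (rule l2H_if_support_subset_two_points[of a b]) (simp add: y_def)
  have "l2norm (ssub (K (xs (r n))) y) = norm ((v \<circ> r) n - l)" for n
  proof -
    have "l2norm (ssub (K (xs (r n))) y) =
        sqrt (qnorm2 (ssub (K (xs (r n))) y a) + qnorm2 (ssub (K (xs (r n))) y b))"
      by (rule l2norm_two_point_support) (use \<open>a \<noteq> b\<close> support xs in \<open>auto simp: ssub_def y_def\<close>)
    moreover obtain la lb where "l = (la, lb)"
      by (cases l)
    ultimately show ?thesis
      using \<open>a \<noteq> b\<close>
      by (simp add: v_def y_def ssub_def norm_Pair norm_quat_vec_diff_squared)
  qed
  moreover have "(\<lambda>n. norm ((v \<circ> r) n - l)) \<longlonglongrightarrow> 0"
    using lim by (simp add: o_def tendsto_norm_zero_iff LIM_zero_iff)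
  ultimately have "(\<lambda>n. l2norm (ssub (K (xs (r n))) y)) \<longlonglongrightarrow> 0"
    by simp
  then show "\<exists>r y. strict_mono r \<and> y \<in> l2H \<and> (\<lambda>n. l2norm (ssub (K (xs (r n))) y)) \<longlonglongrightarrow> 0"
    using r y by blast
qed

definition shift_by :: "int \<Rightarrow> qop" where
  "shift_by k x = (\<lambda>i. x (i + k))"

lemma bij_betw_plus_int: "bij_betw (\<lambda>i::int. i + k) UNIV UNIV"
  by (rule bij_betwI[of _ _ _ "\<lambda>i. i - k"]) auto

lemma shift_by_l2H: "x \<in> l2H \<Longrightarrow> shift_by k x \<in> l2H"
  unfolding l2H_def shift_by_def
  using summable_on_reindex_bij_betw[OF bij_betw_plus_int[of k], of "\<lambda>i. qnorm2 (x i)"]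
  by simp

lemma l2norm_shift_by: "l2norm (shift_by k x) = l2norm x"
  unfolding l2norm_def shift_by_def
  using infsum_reindex_bij_betw[OF bij_betw_plus_int[of k], of "\<lambda>i. qnorm2 (x i)"]
  by simp

lemma bounded_op_shift_by: "bounded_op (shift_by k)"
  unfolding bounded_op_def
  by (auto simp: shift_by_l2H l2norm_shift_by intro!: exI[of _ 1])
     (auto simp: shift_by_def sadd_def srmul_def)

lemma invertible_op_shift_by: "invertible_op (shift_by k)"
  unfolding invertible_op_def
  by (auto simp: bounded_op_shift_by intro!: exI[of _ "shift_by (- k)"]) (auto simp: shift_by_def)

lemma Rq_qzero: "Rq qzero T x = T (T x)"
  unfolding Rq_def
  by (rule ext, rule quat_eqI)
     (simp_all add: sadd_def ssub_def sscale_def qscale_def qadd_def qsub_def qneg_def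
      qzero_def qnorm_def qnorm2_def idop_def)

text \<open>The finite-rank correction \<open>R\<^sup>2 - shift_by 2\<close>.\<close>

definition Rshift_sq_defect :: qop where
  "Rshift_sq_defect x = (\<lambda>i. if i = -1 \<or> i = -2 then qneg (x (i + 2)) else qzero)"

lemma Rshift_Rshift_eq: "Rshift (Rshift x) = sadd (shift_by 2 x) (Rshift_sq_defect x)"
proof
  fix i :: int
  show "Rshift (Rshift x) i = sadd (shift_by 2 x) (Rshift_sq_defect x) i"
    by (cases "i = -1"; cases "i = -2")
       (auto simp: Rshift_def shift_by_def Rshift_sq_defect_def sadd_def add.assoc)
qed

lemma l2norm_Rshift_sq_defect_le: "x \<in> l2H \<Longrightarrow> l2norm (Rshift_sq_defect x) \<le> l2norm x"
  using l2norm_two_point_support[of "-1" "-2" "Rshift_sq_defect x"]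
    two_coordinates_le_l2norm[of x 1 0]
  by (simp add: Rshift_sq_defect_def qnorm2_def qneg_def)

lemma compact_op_Rshift_sq_defect: "compact_op Rshift_sq_defect"
proof (rule compact_op_if_two_point_support[of _ "-1" "-2"])
  show "bounded_op Rshift_sq_defect"
    unfolding bounded_op_def
  proof (intro conjI)
    show "\<forall>x\<in>l2H. Rshift_sq_defect x \<in> l2H"
      by (auto intro: l2H_if_support_subset_two_points[of "-1" "-2"] simp: Rshift_sq_defect_def)
    show "\<exists>C. \<forall>x\<in>l2H. l2norm (Rshift_sq_defect x) \<le> C * l2norm x"
      using l2norm_Rshift_sq_defect_le by (intro exI[of _ 1]) simp
  qed (auto simp: Rshift_sq_defect_def sadd_def srmul_def qneg_qadd qneg_qmul)
qed (auto simp: Rshift_sq_defect_def)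

lemma Phi0_Rq_qzero_Rshift: "Phi0 (Rq qzero Rshift)"
  unfolding Phi0_def Rq_qzero Rshift_Rshift_eq
  using invertible_op_shift_by compact_op_Rshift_sq_defect by blast

lemma not_invertible_op_Rq_qzero_Rshift: "\<not> invertible_op (Rq qzero Rshift)"
proof
  define e0 :: qseq where "e0 = (\<lambda>i. if i = 0 then Quat 1 0 0 0 else qzero)"
  have e0: "e0 \<in> l2H"
    by (rule l2H_if_finite_support) (simp add: e0_def)
  have "Rq qzero Rshift e0 = Rq qzero Rshift zero_seq"
    by (auto simp: Rq_qzero Rshift_def e0_def zero_seq_def)
  moreover assume "invertible_op (Rq qzero Rshift)"
  ultimately have "e0 = zero_seq"
    using invertible_op_inj_on e0 zero_seq_l2H by (blast dest: inj_onD)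
  then show False
    by (metis e0_def zero_seq_def qzero_def quat.inject zero_neq_one)
qed

theorem mainTheorem14:
  shows "S_Phi0_spectrum Rshift \<subset> S_spectrum Rshift"
proof -
  have "qzero \<in> S_spectrum Rshift"
    using not_invertible_op_Rq_qzero_Rshift by (simp add: S_spectrum_def)
  moreover have "qzero \<notin> S_Phi0_spectrum Rshift"
    using Phi0_Rq_qzero_Rshift by (simp add: S_Phi0_spectrum_def)
  ultimately show ?thesis
    using S_Phi0_spectrum_subset_S_spectrum by blast
qed

end
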